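(* Assume (F1), (F2), (H1), (H2), and let $c>c^*$. Then for every $\eta\in\big(1,\min\{1+\sigma,\lambda_2(c)/\lambda_1(c)\}\big)$ there exists $Q(c,\eta)>1$ such that for any $q>Q(c,\eta)$ and any $\xi^{\pm}\in\mathbb{R}$, the functions $$\phi^+(\xi)=\min\Big\{K,\ e^{\lambda_1(c)(\xi+\xi^+)}+q\,e^{\eta\lambda_1(c)(\xi+\xi^+)}\Big\},\qquad \phi^-(\xi)=\max\Big\{0,\ e^{\lambda_1(c)(\xi+\xi^-)}-q\,e^{\eta\lambda_1(c)(\xi+\xi^-)}\Big\}$$ are a super-solution and a sub-solution (with speed $c$), respectively.
   Context: Fix constants $d>0$, $\tau\geq0$, $K>0$, $f:[0,K]^2\to\mathbb{R}$ and $h:\mathbb{R}\to\mathbb{R}$ (partial derivatives of $f$ assumed to exist). (F1) $f\in C([0,K]^2,\mathbb{R})$, $f(0,0)=f(K,K)=0$, $f(u,u)>0$ for $u\in(0,K)$, $\partial_2f(u,v)\geq0$ on $[0,K]^2$. (F2) There exist $M>0$, $\sigma\in(0,1]$ with $0\leq \partial_1f(0,0)u+\partial_2f(0,0)v-f(u,v)\leq M(u+v)^{1+\sigma}$ on $[0,K]^2$, and $\partial_1f(K,K)+\partial_2f(K,K)<0$. (The $\sigma$ in the claim is this one.) (H1) $h\ge0$, even, integrable, $\int_{\mathbb{R}}h=1$. (H2) There is $\lambda_0\in(0,\infty]$ with $\int_0^\infty h(x)e^{\lambda x}dx<\infty$ for all $\lambda<\lambda_0$. Let $G(\lambda)=\int_{\mathbb{R}}h(y)e^{-\lambda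 y}dy$, $\lambda^+=\lambda_0$ if $\partial_2f(0,0)>0$ and $\lambda^+=+\infty$ otherwise, and $\Delta(c,\lambda)=c\lambda-d[e^{\lambda}+e^{-\lambda}-2]-\partial_1f(0,0)-\partial_2f(0,0)e^{-\lambda c\tau}G(\lambda)$. Let $c^*>0$ be the unique number for which there is $\lambda^*\in(0,\lambda^+)$ with $\Delta(c^*,\lambda^* )=0=\partial_\lambda\Delta(c^*,\lambda^* )$; for $c>c^*$ the equation $\Delta(c,\cdot)=0$ has exactly two positive roots $\lambda_1(c)<\lambda_2(c)$ in $(0,\lambda^+)$. Notation: $\Delta_1\varphi(\xi)=\varphi(\xi+1)-2\varphi(\xi)+\varphi(\xi-1)$, $(h*\varphi)(\xi)=\int h(y)\varphi(\xi-y)dy$. For absolutely continuous $\varphi:\mathbb{R}\to[0,K]$ set $N_c[\varphi](\xi)=c\lim_{s\to0}\frac{\varphi(\xi)-\varphi(\xi-s)}{s}-d\Delta_1\varphi(\xi)-f(\varphi(\xi),(h*\varphi)(\xi-c\tau))$. A super-solution is a non-decreasing continuous $\varphi^+$ with $\varphi^+(-\infty)=0$, differentiable a.e., with $N_c[\varphi^+]\ge0$ a.e. A sub-solution is a continuous $\varphi^-$ with $\varphi^-(-\infty)=0$, not identically zero, differentiable a.e., with $N_c[\varphi^-]\le0$ a.e. *)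

theory Defs
  imports "HOL-Analysis.Analysis"
begin

definition abs_continuous :: "(real \<Rightarrow> real) \<Rightarrow> bool" where
  "abs_continuous \<phi> \<longleftrightarrow>
     (\<forall>\<epsilon>>0. \<exists>\<delta>>0. \<forall>(n::nat) (a::nat\<Rightarrow>real) (b::nat\<Rightarrow>real).
        (\<forall>i<n. a i \<le> b i) \<and> (\<forall>i. Suc i < n \<longrightarrow> b i \<le> a (Suc i)) \<and>
        (\<Sum>i<n. b i - a i) < \<delta> \<longrightarrow> (\<Sum>i<n. \<bar>\<phi> (b i) - \<phi> (a i)\<bar>) < \<epsilon>)"

definition disc_lap :: "(real \<Rightarrow> real) \<Rightarrow> real \<Rightarrow> real" where
  "disc_lap \<phi> \<xi> = \<phi> (\<xi> + 1) - 2 * \<phi> \<xi> + \<phi> (\<xi> - 1)"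

definition conv :: "(real \<Rightarrow> real) \<Rightarrow> (real \<Rightarrow> real) \<Rightarrow> real \<Rightarrow> real" where
  "conv h \<phi> \<xi> = integral UNIV (\<lambda>y. h y * \<phi> (\<xi> - y))"

text \<open>N_c[phi](xi), evaluated at a point where phi has derivative D
  (the limit in the definition of N_c is the derivative of phi at xi).\<close>
definition Nop :: "real \<Rightarrow> real \<Rightarrow> real \<Rightarrow> (real \<Rightarrow> real \<Rightarrow> real) \<Rightarrow> (real \<Rightarrow> real)
    \<Rightarrow> (real \<Rightarrow> real) \<Rightarrow> real \<Rightarrow> real \<Rightarrow> real" where
  "Nop c d \<tau> f h \<phi> \<xi> D = c * D - d * disc_lap \<phi> \<xi> - f (\<phi> \<xi>) (conv h \<phi> (\<xi> - c * \<tau>))"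

definition admissible :: "real \<Rightarrow> (real \<Rightarrow> real) \<Rightarrow> bool" where
  "admissible K \<phi> \<longleftrightarrow> abs_continuous \<phi> \<and> (\<forall>x. \<phi> x \<in> {0..K})"

definition super_solution :: "real \<Rightarrow> real \<Rightarrow> real \<Rightarrow> real \<Rightarrow> (real \<Rightarrow> real \<Rightarrow> real)
    \<Rightarrow> (real \<Rightarrow> real) \<Rightarrow> (real \<Rightarrow> real) \<Rightarrow> bool" where
  "super_solution K c d \<tau> f h \<phi> \<longleftrightarrow>
     admissible K \<phi> \<and> mono \<phi> \<and> continuous_on UNIV \<phi> \<and> (\<phi> \<longlongrightarrow> 0) at_bot \<and>
     (AE \<xi> in lborel. \<exists>D. (\<phi> has_real_derivative D) (at \<xi>) \<and> Nop c d \<tau> f h \<phi> \<xi> D \<ge> 0)"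

definition sub_solution :: "real \<Rightarrow> real \<Rightarrow> real \<Rightarrow> real \<Rightarrow> (real \<Rightarrow> real \<Rightarrow> real)
    \<Rightarrow> (real \<Rightarrow> real) \<Rightarrow> (real \<Rightarrow> real) \<Rightarrow> bool" where
  "sub_solution K c d \<tau> f h \<phi> \<longleftrightarrow>
     admissible K \<phi> \<and> continuous_on UNIV \<phi> \<and> (\<phi> \<longlongrightarrow> 0) at_bot \<and> (\<exists>x. \<phi> x \<noteq> 0) \<and>
     (AE \<xi> in lborel. \<exists>D. (\<phi> has_real_derivative D) (at \<xi>) \<and> Nop c d \<tau> f h \<phi> \<xi> D \<le> 0)"

definition Gfun :: "(real \<Rightarrow> real) \<Rightarrow> real \<Rightarrow> real" where
  "Gfun h l = integral UNIV (\<lambda>y. h y * exp (- l * y))"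

definition Delta :: "real \<Rightarrow> real \<Rightarrow> real \<Rightarrow> real \<Rightarrow> (real \<Rightarrow> real) \<Rightarrow> real \<Rightarrow> real \<Rightarrow> real" where
  "Delta d \<tau> a b h c l =
     c * l - d * (exp l + exp (- l) - 2) - a - b * exp (- l * c * \<tau>) * Gfun h l"

definition lambda_plus :: "real \<Rightarrow> ereal \<Rightarrow> ereal" where
  "lambda_plus b lam0 = (if b > 0 then lam0 else \<infinity>)"

end

theory Submission
  imports Defs "HOL-Real_Asymp.Real_Asymp"
begin

text \<open>Both profiles are built from bi_exp r s \<xi> = e^{lam1 (\<xi>+s)} + r e^{\<eta> lam1 (\<xi>+s)}. Applying the
  linearisation of N_c at 0 to it gives r \<Delta>(\<eta> lam1) e^{\<eta> lam1 (\<xi>+s)}, because \<Delta> lam1 = 0; and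
  \<Delta>(\<eta> lam1) > 0 since \<Delta> is concave, vanishes only at lam1 and lam2, and lam1 < \<eta> lam1 < lam2.

  For phi_plus (r = q \<ge> 0), (F2) gives f(u,v) \<le> f1(0,0) u + f2(0,0) v, so N_c is at least the
  nonnegative residual where phi_plus < K; where phi_plus = K it is locally constant, and
  f(K,v) \<le> f(K,K) = 0. For phi_minus (r = -q), the residual -q \<Delta>(\<eta> lam1) e^{\<eta> lam1 \<xi>} must absorb the
  error M (u+v)^{1+\<sigma>} = O(e^{(1+\<sigma>) lam1 \<xi>}) of (F2); on the support of phi_minus one has
  lam1 (\<xi>+m) \<le> 0, so this holds for q large as \<eta> < 1 + \<sigma>. Where phi_minus = 0, f(0,v) \<ge> f(0,0) = 0.
  Both profiles are a smooth function frozen beyond one point, hence Lipschitz (so absolutely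
  continuous) and differentiable off that point.\<close>

lemma measurable_mult_continuous:
  fixes h g :: "real \<Rightarrow> real"
  assumes "h integrable_on UNIV" "continuous_on UNIV g"
  shows "(\<lambda>y. h y * g y) \<in> borel_measurable (lebesgue_on S)"
proof -
  have "(\<lambda>y. h y * g y) \<in> borel_measurable (lebesgue_on UNIV)"
    by (intro borel_measurable_times integrable_imp_measurable assms
          continuous_imp_measurable_on_sets_lebesgue) auto
  then show ?thesis by (rule measurable_restrict_mono) auto
qed

lemma integrable_even_kernel_exp:
  fixes h :: "real \<Rightarrow> real" and lam0 :: ereal
  assumes h_nonneg: "\<And>x. h x \<ge> 0" and h_even: "\<And>x. h (- x) = h x"
    and h_int: "h integrable_on UNIV"
    and h_exp: "\<And>l. ereal l < lam0 \<Longrightarrow> (\<lambda>x. h x * exp (l * x)) integrable_on {0..}"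
    and l: "0 \<le> l" "ereal l < lam0"
  shows "(\<lambda>y. h y * exp (- l * y)) integrable_on UNIV"
proof -
  have "h absolutely_integrable_on UNIV"
    using h_int h_nonneg by (intro nonnegative_absolutely_integrable) auto
  then have "h absolutely_integrable_on {0..}"
    by (rule set_integrable_subset) auto
  then have h_half: "h integrable_on {0..}"
    by (rule set_lebesgue_integral_eq_integral(1))
  have right: "(\<lambda>y. h y * exp (- l * y)) absolutely_integrable_on {0..}"
  proof (rule measurable_bounded_by_integrable_imp_absolutely_integrable)
    show "h integrable_on {0..}" by (fact h_half)
    show "(\<lambda>y. h y * exp (- l * y)) \<in> borel_measurable (lebesgue_on {0..})"
      by (rule measurable_mult_continuous[OF h_int]) (intro continuous_intros)
    show "norm (h y * exp (- l * y)) \<le> h y" if "y \<in> {0..}" for y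
    proof -
      have "exp (- l * y) \<le> 1" using that l by simp
      then show ?thesis using h_nonneg[of y] by (simp add: abs_mult mult_left_le)
    qed
  qed auto
  have "(\<lambda>x. h x * exp (l * x)) absolutely_integrable_on {0..}"
    using h_exp[OF l(2)] h_nonneg by (intro nonnegative_absolutely_integrable) auto
  then have "(\<lambda>x. h (- x) * exp (l * (- x))) absolutely_integrable_on {..0}"
    using has_absolute_integral_reflect_real[of "{..0}" "{0..}" "\<lambda>x. h x * exp (l * x)"] by auto
  then have left: "(\<lambda>y. h y * exp (- l * y)) absolutely_integrable_on {..0}"
    by (simp add: h_even)
  have "(\<lambda>y. h y * exp (- l * y)) absolutely_integrable_on ({..0} \<union> {0..})"
    by (rule set_integrable_Un[OF left right]) auto
  moreover have "{..0} \<union> {0..} = (UNIV :: real set)" by auto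
  ultimately show ?thesis using set_lebesgue_integral_eq_integral(1) by metis
qed

lemma has_integral_Gfun_shift:
  fixes h :: "real \<Rightarrow> real"
  assumes "(\<lambda>y. h y * exp (- l * y)) integrable_on UNIV"
  shows "((\<lambda>y. h y * exp (l * (x - y + p))) has_integral exp (l * (x + p)) * Gfun h l) UNIV"
proof -
  have "((\<lambda>y. exp (l * (x + p)) * (h y * exp (- l * y))) has_integral exp (l * (x + p)) * Gfun h l) UNIV"
    unfolding Gfun_def by (intro has_integral_mult_right integrable_integral assms)
  moreover have "exp (l * (x + p)) * (h y * exp (- l * y)) = h y * exp (l * (x - y + p))" for y
  proof -
    have "l * (x - y + p) = l * (x + p) + - l * y" by (simp add: algebra_simps)
    then show ?thesis by (simp only: exp_add mult_ac)
  qed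
  ultimately show ?thesis by (simp only:)
qed

lemma conv_integrable:
  fixes h \<phi> :: "real \<Rightarrow> real"
  assumes h_nonneg: "\<And>x. h x \<ge> 0" and h_int: "h integrable_on UNIV"
    and \<phi>_cont: "continuous_on UNIV \<phi>" and \<phi>_range: "\<And>x. \<phi> x \<in> {0..K}"
  shows "(\<lambda>y. h y * \<phi> (x - y)) integrable_on UNIV"
proof (rule measurable_bounded_by_integrable_imp_integrable)
  show "(\<lambda>y. h y * \<phi> (x - y)) \<in> borel_measurable (lebesgue_on UNIV)"
    by (rule measurable_mult_continuous[OF h_int])
      (intro continuous_on_compose2[OF \<phi>_cont] continuous_intros; auto)
  show "(\<lambda>y. K * h y) integrable_on UNIV"
    using integrable_on_cmult_left[OF h_int, of K] by simp
  show "norm (h y * \<phi> (x - y)) \<le> K * h y" for y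
    using \<phi>_range[of "x - y"] h_nonneg[of y] mult_left_mono[of "\<phi> (x - y)" K "h y"]
    by (simp add: abs_mult mult.commute)
qed auto

lemma conv_bounds:
  fixes h \<phi> :: "real \<Rightarrow> real"
  assumes h_nonneg: "\<And>x. h x \<ge> 0" and h_int: "h integrable_on UNIV" and h_one: "integral UNIV h = 1"
    and \<phi>_cont: "continuous_on UNIV \<phi>" and \<phi>_range: "\<And>x. \<phi> x \<in> {0..K}"
  shows "conv h \<phi> x \<in> {0..K}"
proof -
  note int = conv_integrable[OF h_nonneg h_int \<phi>_cont \<phi>_range]
  have "0 \<le> conv h \<phi> x"
    unfolding conv_def using int \<phi>_range h_nonneg by (intro integral_nonneg) auto
  moreover have "conv h \<phi> x \<le> integral UNIV (\<lambda>y. K * h y)"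
    unfolding conv_def using int \<phi>_range h_nonneg integrable_on_cmult_left[OF h_int, of K]
    by (intro integral_le) (auto simp: mult.commute[of K] intro!: mult_left_mono)
  ultimately show ?thesis using h_one by simp
qed

lemma conv_le_has_integral:
  fixes h \<phi> \<psi> :: "real \<Rightarrow> real"
  assumes "(\<lambda>y. h y * \<phi> (x - y)) integrable_on UNIV"
    and "((\<lambda>y. h y * \<psi> (x - y)) has_integral I) UNIV"
    and "\<And>y. h y \<ge> 0" and "\<And>y. \<phi> y \<le> \<psi> y"
  shows "conv h \<phi> x \<le> I"
  unfolding conv_def using assms by (intro has_integral_le[OF integrable_integral]) (auto intro: mult_left_mono)

lemma has_integral_le_conv:
  fixes h \<phi> \<psi> :: "real \<Rightarrow> real"
  assumes "(\<lambda>y. h y * \<phi> (x - y)) integrable_on UNIV"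
    and "((\<lambda>y. h y * \<psi> (x - y)) has_integral I) UNIV"
    and "\<And>y. h y \<ge> 0" and "\<And>y. \<psi> y \<le> \<phi> y"
  shows "I \<le> conv h \<phi> x"
  unfolding conv_def using assms by (intro has_integral_le[OF _ integrable_integral]) (auto intro: mult_left_mono)

lemma nondecreasing_if_deriv_within_nonneg:
  fixes g g' :: "real \<Rightarrow> real"
  assumes deriv: "\<And>x. x \<in> {a..b} \<Longrightarrow> (g has_real_derivative g' x) (at x within {a..b})"
    and nonneg: "\<And>x. x \<in> {a..b} \<Longrightarrow> g' x \<ge> 0"
    and xy: "a \<le> x" "x \<le> y" "y \<le> b"
  shows "g x \<le> g y"
proof -
  have "\<exists>z\<in>{x..y}. g y - g x = g' z * (y - x)"
  proof (rule mvt_very_simple[where f' = "\<lambda>z t. g' z * t"])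
    fix z assume "x \<le> z" "z \<le> y"
    then have "(g has_real_derivative g' z) (at z within {x..y})"
      using xy by (intro DERIV_subset[OF deriv]) auto
    then show "(g has_derivative (\<lambda>t. g' z * t)) (at z within {x..y})"
      by (simp add: has_field_derivative_def)
  qed fact
  then obtain z where "z \<in> {x..y}" "g y - g x = g' z * (y - x)" by blast
  moreover have "g' z \<ge> 0" using nonneg xy \<open>z \<in> {x..y}\<close> by auto
  ultimately show ?thesis using xy by (metis diff_ge_0_iff_ge mult_nonneg_nonneg)
qed

lemma lipschitz_imp_abs_continuous:
  assumes "L-lipschitz_on UNIV \<phi>"
  shows "abs_continuous \<phi>"
  unfolding abs_continuous_def
proof (intro allI impI)
  fix \<epsilon> :: real assume \<epsilon>: "\<epsilon> > 0"
  have L: "L \<ge> 0" using lipschitz_on_nonneg[OF assms] .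
  show "\<exists>\<delta>>0. \<forall>(n::nat) (a::nat\<Rightarrow>real) (b::nat\<Rightarrow>real).
        (\<forall>i<n. a i \<le> b i) \<and> (\<forall>i. Suc i < n \<longrightarrow> b i \<le> a (Suc i)) \<and>
        (\<Sum>i<n. b i - a i) < \<delta> \<longrightarrow> (\<Sum>i<n. \<bar>\<phi> (b i) - \<phi> (a i)\<bar>) < \<epsilon>"
  proof (intro exI[of _ "\<epsilon> / (L + 1)"] conjI allI impI)
    show "\<epsilon> / (L + 1) > 0" using \<epsilon> L by simp
    fix n a b assume H: "(\<forall>i<n. a i \<le> b (i::nat)) \<and> (\<forall>i. Suc i < n \<longrightarrow> b i \<le> a (Suc i)) \<and>
        (\<Sum>i<n. b i - a i) < \<epsilon> / (L + 1)"
    have "(\<Sum>i<n. \<bar>\<phi> (b i) - \<phi> (a i)\<bar>) \<le> (\<Sum>i<n. (L + 1) * (b i - a i))"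
    proof (rule sum_mono)
      fix i assume "i \<in> {..<n}"
      then have "a i \<le> b i" using H by auto
      moreover have "\<bar>\<phi> (b i) - \<phi> (a i)\<bar> \<le> L * \<bar>b i - a i\<bar>"
        using lipschitz_onD[OF assms, of "b i" "a i"] by (simp add: dist_real_def)
      ultimately show "\<bar>\<phi> (b i) - \<phi> (a i)\<bar> \<le> (L + 1) * (b i - a i)"
        by (simp add: algebra_simps)
    qed
    also have "\<dots> = (L + 1) * (\<Sum>i<n. b i - a i)" by (simp add: sum_distrib_left)
    also have "\<dots> < (L + 1) * (\<epsilon> / (L + 1))" using H L by (intro mult_strict_left_mono) auto
    also have "\<dots> = \<epsilon>" using L by simp
    finally show "(\<Sum>i<n. \<bar>\<phi> (b i) - \<phi> (a i)\<bar>) < \<epsilon>" .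
  qed
qed

lemma lipschitz_on_truncation:
  fixes g g' :: "real \<Rightarrow> real"
  assumes deriv: "\<And>x. x \<le> a \<Longrightarrow> (g has_real_derivative g' x) (at x)"
    and bound: "\<And>x. x \<le> a \<Longrightarrow> \<bar>g' x\<bar> \<le> L"
  shows "L-lipschitz_on UNIV (\<lambda>x. g (min x a))"
proof (rule lipschitz_onI)
  show "0 \<le> L" using bound[of a] by linarith
  fix x y :: real
  have "norm (g (min x a) - g (min y a)) \<le> L * norm (min x a - min y a)"
    by (rule field_differentiable_bound[of "{..a}"])
      (auto intro: has_field_derivative_at_within deriv bound)
  also have "\<dots> \<le> L * norm (x - y)"
    using \<open>0 \<le> L\<close> by (intro mult_left_mono) (auto simp: min_def)
  finally show "dist (g (min x a)) (g (min y a)) \<le> L * dist x y"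
    by (simp add: dist_norm)
qed

lemma has_real_derivative_truncation_below:
  fixes g :: "real \<Rightarrow> real"
  assumes "(g has_real_derivative D) (at x)" "x < a"
  shows "((\<lambda>x. g (min x a)) has_real_derivative D) (at x)"
  by (rule has_field_derivative_transform_within_open[OF assms(1), of "{..<a}"])
    (use assms(2) in auto)

lemma has_real_derivative_truncation_above:
  fixes g :: "real \<Rightarrow> real"
  assumes "a < x"
  shows "((\<lambda>x. g (min x a)) has_real_derivative 0) (at x)"
proof (rule has_field_derivative_transform_within_open[where S = "{a<..}" and f = "\<lambda>_. g a"])
  show "((\<lambda>_. g a) has_real_derivative 0) (at x)" by simp
qed (use assms in auto)

lemma exp_convex_comb:
  fixes t x y :: real
  assumes "0 \<le> t" "t \<le> 1"
  shows "exp (t * x + (1 - t) * y) \<le> t * exp x + (1 - t) * exp y"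
  using convex_onD[OF exp_convex, of t y x] assms by (simp add: algebra_simps)

lemma tendsto_exp_affine_at_bot:
  fixes l p :: real
  assumes "l > 0"
  shows "((\<lambda>x. exp (l * (x + p))) \<longlongrightarrow> 0) at_bot"
  using assms by real_asymp

lemma delayed_Gfun_convex:
  fixes h :: "real \<Rightarrow> real"
  assumes h_nonneg: "\<And>x. h x \<ge> 0" and t: "0 \<le> t" "t \<le> 1"
    and int: "\<And>k. k \<in> {l1, l2, t * l1 + (1 - t) * l2} \<Longrightarrow> (\<lambda>y. h y * exp (- k * y)) integrable_on UNIV"
  defines "l \<equiv> t * l1 + (1 - t) * l2"
  shows "exp (- l * s) * Gfun h l \<le> t * (exp (- l1 * s) * Gfun h l1) + (1 - t) * (exp (- l2 * s) * Gfun h l2)"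
proof -
  have has_int: "((\<lambda>y. exp (- k * s) * (h y * exp (- k * y))) has_integral exp (- k * s) * Gfun h k) UNIV"
    if "k \<in> {l1, l2, l}" for k
    using int that unfolding Gfun_def l_def by (intro has_integral_mult_right integrable_integral) auto
  have comb: "((\<lambda>y. t * (exp (- l1 * s) * (h y * exp (- l1 * y))) + (1 - t) * (exp (- l2 * s) * (h y * exp (- l2 * y))))
      has_integral (t * (exp (- l1 * s) * Gfun h l1) + (1 - t) * (exp (- l2 * s) * Gfun h l2))) UNIV"
    by (intro has_integral_add has_integral_mult_right has_int) auto
  have pointwise: "exp (- l * s) * (h y * exp (- l * y))
      \<le> t * (exp (- l1 * s) * (h y * exp (- l1 * y))) + (1 - t) * (exp (- l2 * s) * (h y * exp (- l2 * y)))" for y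
  proof -
    have "t * (- l1 * (s + y)) + (1 - t) * (- l2 * (s + y)) = - l * (s + y)"
      unfolding l_def by (simp add: algebra_simps)
    then have "exp (- l * (s + y)) \<le> t * exp (- l1 * (s + y)) + (1 - t) * exp (- l2 * (s + y))"
      using exp_convex_comb[OF t, of "- l1 * (s + y)" "- l2 * (s + y)"] by simp
    then have "h y * exp (- l * (s + y)) \<le> h y * (t * exp (- l1 * (s + y)) + (1 - t) * exp (- l2 * (s + y)))"
      using h_nonneg by (intro mult_left_mono) auto
    then show ?thesis by (simp add: distrib_left exp_add[symmetric] algebra_simps)
  qed
  show ?thesis by (rule has_integral_le[OF has_int comb pointwise]) auto
qed

lemma Delta_concave:
  fixes h :: "real \<Rightarrow> real"
  assumes d: "d \<ge> 0" and b: "b \<ge> 0" and t: "0 \<le> t" "t \<le> 1" and h_nonneg: "\<And>x. h x \<ge> 0"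
    and int: "\<And>k. b > 0 \<Longrightarrow> k \<in> {l1, l2, t * l1 + (1 - t) * l2} \<Longrightarrow> (\<lambda>y. h y * exp (- k * y)) integrable_on UNIV"
  shows "t * Delta d \<tau> a b h c l1 + (1 - t) * Delta d \<tau> a b h c l2 \<le> Delta d \<tau> a b h c (t * l1 + (1 - t) * l2)"
proof -
  define l where "l = t * l1 + (1 - t) * l2"
  have "exp l \<le> t * exp l1 + (1 - t) * exp l2"
    unfolding l_def using exp_convex_comb t by blast
  moreover have "exp (- l) \<le> t * exp (- l1) + (1 - t) * exp (- l2)"
    using exp_convex_comb[OF t, of "- l1" "- l2"] unfolding l_def by (simp add: algebra_simps)
  ultimately have lap: "d * (exp l + exp (- l) - 2)
      \<le> d * (t * (exp l1 + exp (- l1) - 2) + (1 - t) * (exp l2 + exp (- l2) - 2))"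
    using d by (intro mult_left_mono) (auto simp: algebra_simps)
  have nonlocal: "b * (exp (- l * (c * \<tau>)) * Gfun h l)
      \<le> b * (t * (exp (- l1 * (c * \<tau>)) * Gfun h l1) + (1 - t) * (exp (- l2 * (c * \<tau>)) * Gfun h l2))"
  proof (cases "b > 0")
    case True
    show ?thesis unfolding l_def
      by (intro mult_left_mono delayed_Gfun_convex h_nonneg t int[OF True]) (use b in auto)
  qed (use b in simp)
  show ?thesis
    using lap nonlocal unfolding Delta_def l_def[symmetric] by (simp add: l_def algebra_simps)
qed

lemma Delta_nonneg_between_roots:
  fixes h :: "real \<Rightarrow> real"
  assumes d: "d \<ge> 0" and b: "b \<ge> 0" and h_nonneg: "\<And>x. h x \<ge> 0"
    and l: "l1 < l" "l < l2"
    and roots: "Delta d \<tau> a b h c l1 = 0" "Delta d \<tau> a b h c l2 = 0"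
    and int: "\<And>k. b > 0 \<Longrightarrow> l1 \<le> k \<Longrightarrow> k \<le> l2 \<Longrightarrow> (\<lambda>y. h y * exp (- k * y)) integrable_on UNIV"
  shows "Delta d \<tau> a b h c l \<ge> 0"
proof -
  define t where "t = (l2 - l) / (l2 - l1)"
  have t: "0 \<le> t" "t \<le> 1" using l unfolding t_def by (auto simp: field_simps)
  have "t * (l2 - l1) = l2 - l" using l unfolding t_def by simp
  then have l_comb: "t * l1 + (1 - t) * l2 = l" by (simp add: algebra_simps)
  have "t * Delta d \<tau> a b h c l1 + (1 - t) * Delta d \<tau> a b h c l2 \<le> Delta d \<tau> a b h c (t * l1 + (1 - t) * l2)"
    by (rule Delta_concave[OF d b t h_nonneg int]) (use l l_comb in auto)
  then show ?thesis using roots l_comb by simp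
qed

lemma Delta_exp_identity:
  "c * (l * exp (l * (\<xi> + s))) - d * disc_lap (\<lambda>x. exp (l * (x + s))) \<xi> - a * exp (l * (\<xi> + s))
     - b * (exp (l * (\<xi> - c * \<tau> + s)) * Gfun h l) = Delta d \<tau> a b h c l * exp (l * (\<xi> + s))"
proof -
  have "exp (l * (\<xi> + 1 + s)) = exp (l * (\<xi> + s)) * exp l"
    and "exp (l * (\<xi> - 1 + s)) = exp (l * (\<xi> + s)) * exp (- l)"
    and "exp (l * (\<xi> - c * \<tau> + s)) = exp (l * (\<xi> + s)) * exp (- l * c * \<tau>)"
    by (simp_all add: exp_add[symmetric] algebra_simps)
  then show ?thesis unfolding disc_lap_def Delta_def by (simp add: algebra_simps)
qed

locale front_setting =
  fixes d \<tau> K M \<sigma> c lam1 lam2 \<eta> :: real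
    and f f1 f2 :: "real \<Rightarrow> real \<Rightarrow> real"
    and h :: "real \<Rightarrow> real"
    and lam0 :: ereal
  assumes d_nonneg: "d \<ge> 0" and K_pos: "K > 0"
    and f2_deriv: "\<And>u v. u \<in> {0..K} \<Longrightarrow> v \<in> {0..K} \<Longrightarrow>
        ((\<lambda>y. f u y) has_real_derivative f2 u v) (at v within {0..K})"
    and f_zero: "f 0 0 = 0" "f K K = 0"
    and f2_nonneg: "\<And>u v. u \<in> {0..K} \<Longrightarrow> v \<in> {0..K} \<Longrightarrow> f2 u v \<ge> 0"
    and M_nonneg: "M \<ge> 0"
    and f_linear_bound: "\<And>u v. u \<in> {0..K} \<Longrightarrow> v \<in> {0..K} \<Longrightarrow>
        0 \<le> f1 0 0 * u + f2 0 0 * v - f u v \<and>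
        f1 0 0 * u + f2 0 0 * v - f u v \<le> M * (u + v) powr (1 + \<sigma>)"
    and h_nonneg: "\<And>x. h x \<ge> 0" and h_even: "\<And>x. h (- x) = h x"
    and h_int: "h integrable_on UNIV" and h_one: "integral UNIV h = 1"
    and h_exp: "\<And>l. ereal l < lam0 \<Longrightarrow> (\<lambda>x. h x * exp (l * x)) integrable_on {0..}"
    and lam_order: "0 < lam1" "lam1 < lam2" "ereal lam2 < lambda_plus (f2 0 0) lam0"
    and lam_roots: "Delta d \<tau> (f1 0 0) (f2 0 0) h c lam1 = 0"
                   "Delta d \<tau> (f1 0 0) (f2 0 0) h c lam2 = 0"
    and lam_only: "\<And>l. 0 < l \<Longrightarrow> ereal l < lambda_plus (f2 0 0) lam0 \<Longrightarrow>
        Delta d \<tau> (f1 0 0) (f2 0 0) h c l = 0 \<Longrightarrow> l = lam1 \<or> l = lam2"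
    and eta: "1 < \<eta>" "\<eta> < 1 + \<sigma>" "\<eta> < lam2 / lam1"
begin

abbreviation "A \<equiv> f1 0 0"
abbreviation "B \<equiv> f2 0 0"
abbreviation "\<Delta> \<equiv> Delta d \<tau> A B h c"

lemma B_nonneg: "B \<ge> 0"
  using f2_nonneg[of 0 0] K_pos by auto

lemma lam1_lt_eta_lam1: "lam1 < \<eta> * lam1"
  using eta lam_order by simp

lemma eta_lam1_lt_lam2: "\<eta> * lam1 < lam2"
  using eta lam_order by (simp add: field_simps)

lemma f_mono_second:
  assumes "u \<in> {0..K}" "0 \<le> v" "v \<le> w" "w \<le> K"
  shows "f u v \<le> f u w"
  by (rule nondecreasing_if_deriv_within_nonneg[where g' = "f2 u"])
    (use assms f2_deriv f2_nonneg in auto)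

lemma kernel_exp_integrable:
  assumes "B > 0" "0 \<le> l" "l \<le> lam2"
  shows "(\<lambda>y. h y * exp (- l * y)) integrable_on UNIV"
proof (rule integrable_even_kernel_exp[OF h_nonneg h_even h_int h_exp \<open>0 \<le> l\<close>])
  have "ereal l \<le> ereal lam2" using assms by simp
  also have "\<dots> < lam0" using lam_order(3) \<open>B > 0\<close> by (simp add: lambda_plus_def)
  finally show "ereal l < lam0" .
qed

lemma Delta_eta_lam1_pos: "\<Delta> (\<eta> * lam1) > 0"
proof -
  have "\<Delta> (\<eta> * lam1) \<ge> 0"
    using lam1_lt_eta_lam1 eta_lam1_lt_lam2 lam_order
    by (intro Delta_nonneg_between_roots[OF d_nonneg B_nonneg h_nonneg _ _ lam_roots]
        kernel_exp_integrable) auto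
  moreover have "ereal (\<eta> * lam1) < lambda_plus B lam0"
    using eta_lam1_lt_lam2 lam_order(3) by (meson ereal_less_eq(3) less_imp_le order_le_less_trans)
  then have "\<Delta> (\<eta> * lam1) \<noteq> 0"
    using lam_only[of "\<eta> * lam1"] lam1_lt_eta_lam1 eta_lam1_lt_lam2 lam_order by auto
  ultimately show ?thesis by simp
qed

definition bi_exp :: "real \<Rightarrow> real \<Rightarrow> real \<Rightarrow> real" where
  "bi_exp r s \<xi> = exp (lam1 * (\<xi> + s)) + r * exp (\<eta> * lam1 * (\<xi> + s))"

definition bi_exp_deriv :: "real \<Rightarrow> real \<Rightarrow> real \<Rightarrow> real" where
  "bi_exp_deriv r s \<xi> = lam1 * exp (lam1 * (\<xi> + s)) + r * (\<eta> * lam1 * exp (\<eta> * lam1 * (\<xi> + s)))"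

definition bi_exp_conv :: "real \<Rightarrow> real \<Rightarrow> real \<Rightarrow> real" where
  "bi_exp_conv r s x =
     exp (lam1 * (x + s)) * Gfun h lam1 + r * (exp (\<eta> * lam1 * (x + s)) * Gfun h (\<eta> * lam1))"

lemma has_real_derivative_bi_exp: "(bi_exp r s has_real_derivative bi_exp_deriv r s \<xi>) (at \<xi>)"
  unfolding bi_exp_def[abs_def] bi_exp_deriv_def by (auto intro!: derivative_eq_intros)

lemma continuous_on_bi_exp: "continuous_on UNIV (bi_exp r s)"
  unfolding bi_exp_def[abs_def] by (intro continuous_intros)

lemma tendsto_bi_exp_at_bot: "(bi_exp r s \<longlongrightarrow> 0) at_bot"
proof -
  have "((\<lambda>\<xi>. exp (lam1 * (\<xi> + s)) + r * exp (\<eta> * lam1 * (\<xi> + s))) \<longlongrightarrow> 0 + r * 0) at_bot"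
    using lam_order(1) lam1_lt_eta_lam1 by (intro tendsto_intros tendsto_exp_affine_at_bot) auto
  then show ?thesis by (simp add: bi_exp_def[abs_def])
qed

lemma has_integral_bi_exp_conv:
  assumes "B > 0"
  shows "((\<lambda>y. h y * bi_exp r s (x - y)) has_integral bi_exp_conv r s x) UNIV"
proof -
  have "((\<lambda>y. h y * exp (lam1 * (x - y + s)) + r * (h y * exp (\<eta> * lam1 * (x - y + s))))
      has_integral bi_exp_conv r s x) UNIV"
    unfolding bi_exp_conv_def using assms lam_order lam1_lt_eta_lam1 eta_lam1_lt_lam2 less_imp_le[OF lam_order(2)]
    by (intro has_integral_add has_integral_mult_right has_integral_Gfun_shift kernel_exp_integrable) auto
  then show ?thesis by (simp add: bi_exp_def algebra_simps)
qed

lemma linearized_op_bi_exp: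
  "c * bi_exp_deriv r s \<xi> - d * disc_lap (bi_exp r s) \<xi> - A * bi_exp r s \<xi> - B * bi_exp_conv r s (\<xi> - c * \<tau>)
     = r * \<Delta> (\<eta> * lam1) * exp (\<eta> * lam1 * (\<xi> + s))"
proof -
  let ?e1 = "\<lambda>x. exp (lam1 * (x + s))" and ?e2 = "\<lambda>x. exp (\<eta> * lam1 * (x + s))"
  have root: "c * (lam1 * ?e1 \<xi>) - d * disc_lap ?e1 \<xi> - A * ?e1 \<xi>
      - B * (exp (lam1 * (\<xi> - c * \<tau> + s)) * Gfun h lam1) = 0"
    using Delta_exp_identity[of c lam1 \<xi> s d A B \<tau> h] lam_roots(1) by simp
  have residual: "c * (\<eta> * lam1 * ?e2 \<xi>) - d * disc_lap ?e2 \<xi> - A * ?e2 \<xi>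
      - B * (exp (\<eta> * lam1 * (\<xi> - c * \<tau> + s)) * Gfun h (\<eta> * lam1)) = \<Delta> (\<eta> * lam1) * ?e2 \<xi>"
    using Delta_exp_identity[of c "\<eta> * lam1" \<xi> s d A B \<tau> h] by (simp add: mult.assoc)
  have "c * bi_exp_deriv r s \<xi> - d * disc_lap (bi_exp r s) \<xi> - A * bi_exp r s \<xi> - B * bi_exp_conv r s (\<xi> - c * \<tau>)
      = (c * (lam1 * ?e1 \<xi>) - d * disc_lap ?e1 \<xi> - A * ?e1 \<xi>
          - B * (exp (lam1 * (\<xi> - c * \<tau> + s)) * Gfun h lam1))
        + r * (c * (\<eta> * lam1 * ?e2 \<xi>) - d * disc_lap ?e2 \<xi> - A * ?e2 \<xi>
          - B * (exp (\<eta> * lam1 * (\<xi> - c * \<tau> + s)) * Gfun h (\<eta> * lam1)))"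
    unfolding bi_exp_def bi_exp_deriv_def bi_exp_conv_def disc_lap_def by (simp add: algebra_simps)
  then show ?thesis unfolding root residual by simp
qed

lemma Nop_nonneg_at_K:
  assumes cont: "continuous_on UNIV \<phi>" and range: "\<And>x. \<phi> x \<in> {0..K}" and top: "\<phi> \<xi> = K"
  shows "0 \<le> Nop c d \<tau> f h \<phi> \<xi> 0"
proof -
  define V where "V = conv h \<phi> (\<xi> - c * \<tau>)"
  have "V \<in> {0..K}" unfolding V_def by (rule conv_bounds[OF h_nonneg h_int h_one cont range])
  then have "f K V \<le> 0" using f_mono_second[of K V K] f_zero K_pos by auto
  moreover have "d * disc_lap \<phi> \<xi> \<le> 0"
    using range[of "\<xi> + 1"] range[of "\<xi> - 1"] top d_nonneg
    by (intro mult_nonneg_nonpos) (auto simp: disc_lap_def)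
  ultimately show ?thesis unfolding Nop_def top V_def[symmetric] by simp
qed

lemma Nop_nonpos_at_zero:
  assumes cont: "continuous_on UNIV \<phi>" and range: "\<And>x. \<phi> x \<in> {0..K}" and bot: "\<phi> \<xi> = 0"
  shows "Nop c d \<tau> f h \<phi> \<xi> 0 \<le> 0"
proof -
  define V where "V = conv h \<phi> (\<xi> - c * \<tau>)"
  have "V \<in> {0..K}" unfolding V_def by (rule conv_bounds[OF h_nonneg h_int h_one cont range])
  then have "0 \<le> f 0 V" using f_mono_second[of 0 0 V] f_zero K_pos by auto
  moreover have "0 \<le> d * disc_lap \<phi> \<xi>"
    using range[of "\<xi> + 1"] range[of "\<xi> - 1"] bot d_nonneg by (auto simp: disc_lap_def)
  ultimately show ?thesis unfolding Nop_def bot V_def[symmetric] by simp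
qed

definition phi_plus :: "real \<Rightarrow> real \<Rightarrow> real \<Rightarrow> real" where
  "phi_plus q p = (\<lambda>\<xi>. min K (bi_exp q p \<xi>))"

lemma bi_exp_pos: "0 \<le> q \<Longrightarrow> 0 < bi_exp q p \<xi>"
  unfolding bi_exp_def by (simp add: add_pos_nonneg)

lemma bi_exp_strict_mono:
  assumes "0 \<le> q"
  shows "strict_mono (bi_exp q p)"
proof (rule strict_monoI)
  fix x y :: real assume "x < y"
  then have "exp (lam1 * (x + p)) < exp (lam1 * (y + p))"
    and "exp (\<eta> * lam1 * (x + p)) \<le> exp (\<eta> * lam1 * (y + p))"
    using lam_order(1) lam1_lt_eta_lam1 by simp_all
  moreover from this(2) have "q * exp (\<eta> * lam1 * (x + p)) \<le> q * exp (\<eta> * lam1 * (y + p))"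
    using assms by (rule mult_left_mono)
  ultimately show "bi_exp q p x < bi_exp q p y"
    unfolding bi_exp_def by linarith
qed

lemma bi_exp_deriv_bounds:
  assumes "0 \<le> q"
  shows "0 \<le> bi_exp_deriv q p \<xi>" "bi_exp_deriv q p \<xi> \<le> \<eta> * lam1 * bi_exp q p \<xi>"
proof -
  have "lam1 * exp (lam1 * (\<xi> + p)) \<le> \<eta> * lam1 * exp (lam1 * (\<xi> + p))"
    using lam1_lt_eta_lam1 by (intro mult_right_mono) auto
  then show "bi_exp_deriv q p \<xi> \<le> \<eta> * lam1 * bi_exp q p \<xi>"
    unfolding bi_exp_def bi_exp_deriv_def by (simp add: algebra_simps)
  show "0 \<le> bi_exp_deriv q p \<xi>"
    unfolding bi_exp_deriv_def using assms lam_order(1) lam1_lt_eta_lam1 by simp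
qed

lemma bi_exp_attains_K:
  assumes q: "0 \<le> q"
  obtains x0 where "bi_exp q p x0 = K"
proof -
  note strict = bi_exp_strict_mono[OF q, of p]
  obtain a where a: "bi_exp q p a < K"
    using order_tendstoD(2)[OF tendsto_bi_exp_at_bot[of q p] K_pos]
    by (auto simp: eventually_at_bot_linorder)
  define b where "b = ln K / lam1 - p"
  have "K = exp (lam1 * (b + p))" unfolding b_def using K_pos lam_order(1) by simp
  also have "\<dots> \<le> bi_exp q p b" unfolding bi_exp_def using q by simp
  finally have b: "K \<le> bi_exp q p b" .
  have "a \<le> b"
  proof (rule ccontr)
    assume "\<not> a \<le> b"
    then have "bi_exp q p b < bi_exp q p a" using strict_monoD[OF strict] by simp
    with a b show False by simp
  qed
  moreover have "\<forall>x. a \<le> x \<and> x \<le> b \<longrightarrow> isCont (bi_exp q p) x"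
    using DERIV_isCont[OF has_real_derivative_bi_exp] by blast
  ultimately obtain x0 where "bi_exp q p x0 = K"
    using IVT[of "bi_exp q p" a K b] less_imp_le[OF a] b by blast
  then show thesis by (rule that)
qed

lemma phi_plus_truncation:
  assumes q: "0 \<le> q" and x0: "bi_exp q p x0 = K"
  shows "phi_plus q p = (\<lambda>\<xi>. bi_exp q p (min \<xi> x0))"
proof
  fix \<xi>
  note mono = strict_mono_less_eq[OF bi_exp_strict_mono[OF q, of p]]
  show "phi_plus q p \<xi> = bi_exp q p (min \<xi> x0)"
  proof (cases "\<xi> \<le> x0")
    case True
    then have "bi_exp q p \<xi> \<le> K" using mono x0 by metis
    then show ?thesis using True by (simp add: phi_plus_def)
  next
    case False
    then have "K \<le> bi_exp q p \<xi>" using mono[of x0 \<xi>] x0 by simp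
    then show ?thesis using False x0 by (simp add: phi_plus_def)
  qed
qed

lemma phi_plus_range: "0 \<le> q \<Longrightarrow> phi_plus q p \<xi> \<in> {0..K}"
  using bi_exp_pos[of q p \<xi>] K_pos unfolding phi_plus_def by simp

lemma continuous_on_phi_plus: "continuous_on UNIV (phi_plus q p)"
  unfolding phi_plus_def by (intro continuous_intros continuous_on_bi_exp)

lemma Nop_phi_plus_unsaturated:
  assumes q: "0 \<le> q" and below: "bi_exp q p \<xi> \<le> K"
  shows "0 \<le> Nop c d \<tau> f h (phi_plus q p) \<xi> (bi_exp_deriv q p \<xi>)"
proof -
  let ?S = "bi_exp q p" and ?\<phi> = "phi_plus q p"
  define V where "V = conv h ?\<phi> (\<xi> - c * \<tau>)"
  have \<phi>_le: "?\<phi> x \<le> ?S x" for x by (simp add: phi_plus_def)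
  have \<phi>_\<xi>: "?\<phi> \<xi> = ?S \<xi>" using below by (simp add: phi_plus_def)
  note \<phi>_cont = continuous_on_phi_plus[of q p] and \<phi>_range = phi_plus_range[OF q]
  have V_range: "V \<in> {0..K}"
    unfolding V_def by (rule conv_bounds[OF h_nonneg h_int h_one \<phi>_cont \<phi>_range])
  have conv_le: "B * V \<le> B * bi_exp_conv q p (\<xi> - c * \<tau>)"
  proof (cases "B > 0")
    case True
    have "V \<le> bi_exp_conv q p (\<xi> - c * \<tau>)" unfolding V_def
      by (rule conv_le_has_integral[OF conv_integrable[OF h_nonneg h_int \<phi>_cont \<phi>_range]
            has_integral_bi_exp_conv[OF True] h_nonneg \<phi>_le])
    then show ?thesis using True by (simp add: mult_left_mono)
  qed (use B_nonneg in simp)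
  have f_le: "f (?S \<xi>) V \<le> A * ?S \<xi> + B * V"
    using f_linear_bound[of "?S \<xi>" V] bi_exp_pos[OF q, of p \<xi>] below V_range by auto
  have "disc_lap ?\<phi> \<xi> \<le> disc_lap ?S \<xi>"
    using \<phi>_le[of "\<xi> + 1"] \<phi>_le[of "\<xi> - 1"] \<phi>_\<xi> unfolding disc_lap_def by linarith
  then have lap: "d * disc_lap ?\<phi> \<xi> \<le> d * disc_lap ?S \<xi>"
    using d_nonneg by (rule mult_left_mono)
  have "0 \<le> q * \<Delta> (\<eta> * lam1) * exp (\<eta> * lam1 * (\<xi> + p))"
    using q Delta_eta_lam1_pos by simp
  also have "\<dots> = c * bi_exp_deriv q p \<xi> - d * disc_lap ?S \<xi> - A * ?S \<xi> - B * bi_exp_conv q p (\<xi> - c * \<tau>)"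
    by (rule linearized_op_bi_exp[symmetric])
  also have "\<dots> \<le> Nop c d \<tau> f h ?\<phi> \<xi> (bi_exp_deriv q p \<xi>)"
    unfolding Nop_def \<phi>_\<xi> V_def[symmetric] using conv_le f_le lap by linarith
  finally show ?thesis .
qed

lemma super_solution_phi_plus:
  assumes q: "0 \<le> q"
  shows "super_solution K c d \<tau> f h (phi_plus q p)"
proof -
  obtain x0 where x0: "bi_exp q p x0 = K" using bi_exp_attains_K[OF q] .
  note trunc = phi_plus_truncation[OF q x0] and strict = bi_exp_strict_mono[OF q, of p]
  have below: "bi_exp q p x \<le> K" if "x \<le> x0" for x
    unfolding x0[symmetric] strict_mono_less_eq[OF strict] by (fact that)
  have "(\<eta> * lam1 * K)-lipschitz_on UNIV (phi_plus q p)"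
    unfolding trunc
  proof (rule lipschitz_on_truncation[OF has_real_derivative_bi_exp])
    fix x assume "x \<le> x0"
    then have "\<eta> * lam1 * bi_exp q p x \<le> \<eta> * lam1 * K"
      using below lam_order(1) lam1_lt_eta_lam1 by (intro mult_left_mono) auto
    then show "\<bar>bi_exp_deriv q p x\<bar> \<le> \<eta> * lam1 * K" using bi_exp_deriv_bounds[OF q, of p x] by simp
  qed
  then have abs_cont: "abs_continuous (phi_plus q p)" by (rule lipschitz_imp_abs_continuous)
  have mono: "mono (phi_plus q p)"
    unfolding trunc
  proof (rule monoI)
    fix x y :: real assume "x \<le> y"
    then show "bi_exp q p (min x x0) \<le> bi_exp q p (min y x0)"
      by (intro monoD[OF strict_mono_mono[OF strict]]) (simp add: min_def)
  qed
  have "((\<lambda>\<xi>. min K (bi_exp q p \<xi>)) \<longlongrightarrow> min K 0) at_bot"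
    by (intro tendsto_intros tendsto_bi_exp_at_bot)
  then have lim: "(phi_plus q p \<longlongrightarrow> 0) at_bot" using K_pos by (simp add: phi_plus_def)
  have pointwise: "\<exists>D. (phi_plus q p has_real_derivative D) (at \<xi>) \<and> 0 \<le> Nop c d \<tau> f h (phi_plus q p) \<xi> D"
    if "\<xi> \<noteq> x0" for \<xi>
  proof (cases "\<xi> < x0")
    case True
    have "(phi_plus q p has_real_derivative bi_exp_deriv q p \<xi>) (at \<xi>)"
      unfolding trunc by (rule has_real_derivative_truncation_below[OF has_real_derivative_bi_exp True])
    then show ?thesis using Nop_phi_plus_unsaturated[OF q below] True by auto
  next
    case False
    then have "x0 < \<xi>" using that by simp
    have "(phi_plus q p has_real_derivative 0) (at \<xi>)"
      unfolding trunc by (rule has_real_derivative_truncation_above[OF \<open>x0 < \<xi>\<close>])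
    moreover have "phi_plus q p \<xi> = K" using \<open>x0 < \<xi>\<close> x0 by (simp add: trunc)
    ultimately show ?thesis
      using Nop_nonneg_at_K[OF continuous_on_phi_plus phi_plus_range[OF q]] by blast
  qed
  have "AE \<xi> in lborel. \<exists>D. (phi_plus q p has_real_derivative D) (at \<xi>) \<and> 0 \<le> Nop c d \<tau> f h (phi_plus q p) \<xi> D"
    using AE_lborel_singleton[of x0] by eventually_elim (rule pointwise)
  then show ?thesis
    unfolding super_solution_def admissible_def
    using abs_cont mono lim continuous_on_phi_plus[of q p] phi_plus_range[OF q] by simp
qed

definition phi_minus :: "real \<Rightarrow> real \<Rightarrow> real \<Rightarrow> real" where
  "phi_minus q m = (\<lambda>\<xi>. max 0 (bi_exp (- q) m \<xi>))"

definition phi_minus_edge :: "real \<Rightarrow> real \<Rightarrow> real" where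
  "phi_minus_edge q m = - ln q / ((\<eta> - 1) * lam1) - m"

text \<open>Convolving e^{lam1 (\<cdot> + m)} with h and delaying by c \<tau> multiplies it by conv_factor.
  It is set to 0 when B = 0: then Gfun h lam1 need not exist, and the nonlocal argument of f is
  handled by monotonicity in v instead.\<close>

definition conv_factor :: real where
  "conv_factor = (if B > 0 then exp (- lam1 * c * \<tau>) * Gfun h lam1 else 0)"

definition Q0 :: real where
  "Q0 = max (max 1 (K powr (1 - \<eta>))) (M * (1 + conv_factor) powr (1 + \<sigma>) / \<Delta> (\<eta> * lam1))"

lemma conv_factor_nonneg: "0 \<le> conv_factor"
proof (cases "B > 0")
  case True
  have "0 \<le> Gfun h lam1" unfolding Gfun_def
    using kernel_exp_integrable[OF True] lam_order h_nonneg by (intro integral_nonneg) auto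
  then show ?thesis using True unfolding conv_factor_def by simp
qed (simp add: conv_factor_def)

lemma bi_exp_conv_zero:
  "B > 0 \<Longrightarrow> bi_exp_conv 0 m (\<xi> - c * \<tau>) = conv_factor * exp (lam1 * (\<xi> + m))"
  unfolding bi_exp_conv_def conv_factor_def by (simp add: exp_add[symmetric] algebra_simps)

lemma one_le_Q0: "1 \<le> Q0"
  unfolding Q0_def by simp

lemma gt_Q0D:
  assumes "Q0 < q"
  shows "1 < q" "K powr (1 - \<eta>) < q" "M * (1 + conv_factor) powr (1 + \<sigma>) \<le> q * \<Delta> (\<eta> * lam1)"
  using assms Delta_eta_lam1_pos by (auto simp: Q0_def field_simps)

lemma edge_affine:
  "(\<eta> - 1) * lam1 * (\<xi> - phi_minus_edge q m) = (\<eta> - 1) * (lam1 * (\<xi> + m)) + ln q"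
proof -
  define k where "k = (\<eta> - 1) * lam1"
  have "k > 0" unfolding k_def using eta lam_order by simp
  moreover have "phi_minus_edge q m = - ln q / k - m" unfolding phi_minus_edge_def k_def ..
  ultimately have "k * (\<xi> - phi_minus_edge q m) = k * (\<xi> + m) + ln q" by (simp add: field_simps)
  then show ?thesis unfolding k_def by (simp add: mult.assoc)
qed

lemma q_exp_eq:
  assumes "0 < q"
  shows "q * exp (\<eta> * lam1 * (\<xi> + m))
    = exp (lam1 * (\<xi> + m)) * exp ((\<eta> - 1) * lam1 * (\<xi> - phi_minus_edge q m))"
proof -
  have "exp (lam1 * (\<xi> + m)) * exp ((\<eta> - 1) * lam1 * (\<xi> - phi_minus_edge q m))
      = exp (\<eta> * lam1 * (\<xi> + m)) * exp (ln q)"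
    unfolding edge_affine exp_add[symmetric] by (simp add: algebra_simps)
  then show ?thesis using assms by simp
qed

lemma bi_exp_neg_pos_iff:
  assumes "0 < q"
  shows "0 < bi_exp (- q) m \<xi> \<longleftrightarrow> \<xi> < phi_minus_edge q m"
proof -
  have "bi_exp (- q) m \<xi> = exp (lam1 * (\<xi> + m)) - q * exp (\<eta> * lam1 * (\<xi> + m))"
    by (simp add: bi_exp_def)
  also have "\<dots> = exp (lam1 * (\<xi> + m)) * (1 - exp ((\<eta> - 1) * lam1 * (\<xi> - phi_minus_edge q m)))"
    unfolding q_exp_eq[OF assms] by (simp add: algebra_simps)
  finally have "0 < bi_exp (- q) m \<xi> \<longleftrightarrow> (\<eta> - 1) * lam1 * (\<xi> - phi_minus_edge q m) < (\<eta> - 1) * lam1 * 0"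
    by (simp add: zero_less_mult_iff)
  moreover have "(\<eta> - 1) * lam1 > 0" using eta lam_order by simp
  ultimately show ?thesis by (simp only: mult_less_cancel_left_pos) simp
qed

lemma bi_exp_neg_edge: "0 < q \<Longrightarrow> bi_exp (- q) m (phi_minus_edge q m) = 0"
  using q_exp_eq[of q "phi_minus_edge q m" m] by (simp add: bi_exp_def)

lemma below_edge_bounds:
  assumes q: "1 \<le> q" "K powr (1 - \<eta>) \<le> q" and \<xi>: "\<xi> \<le> phi_minus_edge q m"
  shows "lam1 * (\<xi> + m) \<le> 0" "exp (lam1 * (\<xi> + m)) \<le> K"
    and "q * exp (\<eta> * lam1 * (\<xi> + m)) \<le> exp (lam1 * (\<xi> + m))"
proof -
  have k: "(\<eta> - 1) * lam1 > 0" and \<eta>1: "\<eta> - 1 > 0" using eta lam_order by simp_all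
  then have "(\<eta> - 1) * lam1 * (\<xi> - phi_minus_edge q m) \<le> 0"
    using \<xi> by (simp add: mult_nonneg_nonpos)
  then have edge: "(\<eta> - 1) * (lam1 * (\<xi> + m)) \<le> - ln q" unfolding edge_affine by simp
  have "0 \<le> ln q" using q by simp
  then have "(\<eta> - 1) * (lam1 * (\<xi> + m)) \<le> (\<eta> - 1) * 0" using edge by simp
  then show "lam1 * (\<xi> + m) \<le> 0" using \<eta>1 by (simp only: mult_le_cancel_left_pos)
  have "ln (K powr (1 - \<eta>)) \<le> ln q" using q K_pos by (subst ln_le_cancel_iff) auto
  then have "(1 - \<eta>) * ln K \<le> ln q" using K_pos by (simp add: ln_powr)
  then have "(\<eta> - 1) * (lam1 * (\<xi> + m)) \<le> (\<eta> - 1) * ln K" using edge by (simp add: algebra_simps)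
  then have "lam1 * (\<xi> + m) \<le> ln K" using \<eta>1 by (simp only: mult_le_cancel_left_pos)
  then show "exp (lam1 * (\<xi> + m)) \<le> K" using K_pos by (metis exp_le_cancel_iff exp_ln)
  have "exp ((\<eta> - 1) * lam1 * (\<xi> - phi_minus_edge q m)) \<le> 1"
    using \<xi> k by (simp add: mult_nonneg_nonpos)
  moreover have "0 < q" using q by simp
  ultimately show "q * exp (\<eta> * lam1 * (\<xi> + m)) \<le> exp (lam1 * (\<xi> + m))"
    unfolding q_exp_eq[OF \<open>0 < q\<close>] by (simp add: mult_left_le)
qed

lemma phi_minus_truncation:
  assumes "0 < q"
  shows "phi_minus q m = (\<lambda>\<xi>. bi_exp (- q) m (min \<xi> (phi_minus_edge q m)))"
proof
  fix \<xi>
  show "phi_minus q m \<xi> = bi_exp (- q) m (min \<xi> (phi_minus_edge q m))"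
  proof (cases "\<xi> < phi_minus_edge q m")
    case True
    then show ?thesis using bi_exp_neg_pos_iff[OF assms] by (simp add: phi_minus_def)
  next
    case False
    then show ?thesis using bi_exp_neg_pos_iff[OF assms, of m \<xi>] bi_exp_neg_edge[OF assms]
      by (simp add: phi_minus_def min_def)
  qed
qed

lemma phi_minus_le_exp: "0 \<le> q \<Longrightarrow> phi_minus q m \<xi> \<le> exp (lam1 * (\<xi> + m))"
  unfolding phi_minus_def bi_exp_def by simp

lemma phi_minus_range:
  assumes "1 \<le> q" "K powr (1 - \<eta>) \<le> q"
  shows "phi_minus q m \<xi> \<in> {0..K}"
proof (cases "bi_exp (- q) m \<xi> > 0")
  case True
  then have "\<xi> \<le> phi_minus_edge q m" using bi_exp_neg_pos_iff[of q] assms(1) by simp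
  then have "exp (lam1 * (\<xi> + m)) \<le> K" by (rule below_edge_bounds(2)[OF assms])
  then show ?thesis using phi_minus_le_exp[of q m \<xi>] assms(1) K_pos by (simp add: phi_minus_def)
qed (use K_pos in \<open>simp add: phi_minus_def\<close>)

lemma continuous_on_phi_minus: "continuous_on UNIV (phi_minus q m)"
  unfolding phi_minus_def by (intro continuous_intros continuous_on_bi_exp)

lemma bi_exp_neg_deriv_bound:
  assumes q: "1 \<le> q" "K powr (1 - \<eta>) \<le> q" and \<xi>: "\<xi> \<le> phi_minus_edge q m"
  shows "\<bar>bi_exp_deriv (- q) m \<xi>\<bar> \<le> \<eta> * lam1"
proof -
  note R = below_edge_bounds[OF q \<xi>]
  have "exp (lam1 * (\<xi> + m)) \<le> 1" using R(1) by simp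
  then have "lam1 * exp (lam1 * (\<xi> + m)) \<le> \<eta> * lam1"
    using lam_order(1) lam1_lt_eta_lam1 by (smt (verit) mult_left_le)
  moreover have "\<eta> * lam1 * (q * exp (\<eta> * lam1 * (\<xi> + m))) \<le> \<eta> * lam1"
    using order_trans[OF R(3) \<open>exp (lam1 * (\<xi> + m)) \<le> 1\<close>] lam_order(1) lam1_lt_eta_lam1
    by (intro mult_left_le) auto
  moreover have "0 \<le> \<eta> * lam1 * (q * exp (\<eta> * lam1 * (\<xi> + m)))"
    using q lam_order(1) lam1_lt_eta_lam1 by simp
  moreover have "0 \<le> lam1 * exp (lam1 * (\<xi> + m))" using lam_order(1) by simp
  ultimately show ?thesis unfolding bi_exp_deriv_def by (simp add: abs_le_iff algebra_simps)
qed

lemma f_lower_bound: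
  assumes u: "0 \<le> u" "u \<le> e" "u \<le> K" and v: "0 \<le> v" "v \<le> K"
    and v_small: "B > 0 \<Longrightarrow> v \<le> conv_factor * e"
  shows "A * u + B * v - M * ((1 + conv_factor) * e) powr (1 + \<sigma>) \<le> f u v"
proof -
  have exponent: "0 \<le> 1 + \<sigma>" using eta by simp
  show ?thesis
  proof (cases "B > 0")
    case True
    have "u + v \<le> (1 + conv_factor) * e" using v_small[OF True] u by (simp add: algebra_simps)
    then have "(u + v) powr (1 + \<sigma>) \<le> ((1 + conv_factor) * e) powr (1 + \<sigma>)"
      using u v exponent by (intro powr_mono2) auto
    then have "M * (u + v) powr (1 + \<sigma>) \<le> M * ((1 + conv_factor) * e) powr (1 + \<sigma>)"
      using M_nonneg by (rule mult_left_mono)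
    then show ?thesis using f_linear_bound[of u v] u v by auto
  next
    case False
    then have B0: "B = 0" and C0: "conv_factor = 0"
      using B_nonneg by (auto simp: conv_factor_def)
    have "u powr (1 + \<sigma>) \<le> e powr (1 + \<sigma>)" using u exponent by (intro powr_mono2) auto
    then have "M * u powr (1 + \<sigma>) \<le> M * e powr (1 + \<sigma>)" using M_nonneg by (rule mult_left_mono)
    moreover have "A * u - f u 0 \<le> M * u powr (1 + \<sigma>)"
      using f_linear_bound[of u 0] u K_pos B0 by auto
    moreover have "f u 0 \<le> f u v" using f_mono_second[of u 0 v] u v by simp
    ultimately show ?thesis using B0 C0 by simp
  qed
qed

text \<open>This is where \<eta> < 1 + \<sigma> and the choice of Q0 enter.\<close>

lemma error_le_residual:
  assumes "lam1 * (\<xi> + m) \<le> 0" "Q0 < q"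
  shows "M * ((1 + conv_factor) * exp (lam1 * (\<xi> + m))) powr (1 + \<sigma>)
    \<le> q * \<Delta> (\<eta> * lam1) * exp (\<eta> * lam1 * (\<xi> + m))"
proof -
  have "lam1 * (\<xi> + m) * (1 + \<sigma>) \<le> lam1 * (\<xi> + m) * \<eta>"
    using assms(1) eta by (intro mult_left_mono_neg) auto
  then have "exp (lam1 * (\<xi> + m)) powr (1 + \<sigma>) \<le> exp (\<eta> * lam1 * (\<xi> + m))"
    by (simp add: exp_powr_real mult_ac)
  then have "M * ((1 + conv_factor) * exp (lam1 * (\<xi> + m))) powr (1 + \<sigma>)
      \<le> M * (1 + conv_factor) powr (1 + \<sigma>) * exp (\<eta> * lam1 * (\<xi> + m))"
    using M_nonneg conv_factor_nonneg
    by (simp add: powr_mult mult.assoc mult_left_mono)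
  also have "\<dots> \<le> q * \<Delta> (\<eta> * lam1) * exp (\<eta> * lam1 * (\<xi> + m))"
    using gt_Q0D(3)[OF assms(2)] by (intro mult_right_mono) auto
  finally show ?thesis .
qed

lemma Nop_phi_minus_positive:
  assumes q: "Q0 < q" and \<xi>: "\<xi> < phi_minus_edge q m"
  shows "Nop c d \<tau> f h (phi_minus q m) \<xi> (bi_exp_deriv (- q) m \<xi>) \<le> 0"
proof -
  let ?g = "bi_exp (- q) m" and ?\<psi> = "phi_minus q m"
  let ?e = "exp (lam1 * (\<xi> + m))" and ?err = "M * ((1 + conv_factor) * exp (lam1 * (\<xi> + m))) powr (1 + \<sigma>)"
  note q_bounds = less_imp_le[OF gt_Q0D(1)[OF q]] less_imp_le[OF gt_Q0D(2)[OF q]]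
  note R = below_edge_bounds[OF q_bounds less_imp_le[OF \<xi>]]
  note \<psi>_cont = continuous_on_phi_minus[of q m] and \<psi>_range = phi_minus_range[OF q_bounds, of m]
  note \<psi>_int = conv_integrable[OF h_nonneg h_int \<psi>_cont \<psi>_range]
  have g_pos: "0 < ?g \<xi>" using bi_exp_neg_pos_iff[of q m \<xi>] gt_Q0D(1)[OF q] \<xi> by simp
  have \<psi>_\<xi>: "?\<psi> \<xi> = ?g \<xi>" using g_pos by (simp add: phi_minus_def)
  have g_le: "?g x \<le> ?\<psi> x" for x by (simp add: phi_minus_def)
  have g_bounds: "?g \<xi> \<le> ?e" "?g \<xi> \<le> K" using \<psi>_\<xi> phi_minus_le_exp[of q m \<xi>] \<psi>_range[of \<xi>] q_bounds by auto
  define V where "V = conv h ?\<psi> (\<xi> - c * \<tau>)"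
  have V_range: "V \<in> {0..K}" unfolding V_def by (rule conv_bounds[OF h_nonneg h_int h_one \<psi>_cont \<psi>_range])
  have V_small: "V \<le> conv_factor * ?e" if "B > 0"
  proof -
    have "V \<le> bi_exp_conv 0 m (\<xi> - c * \<tau>)" unfolding V_def
      using phi_minus_le_exp[of q m] q_bounds
      by (intro conv_le_has_integral[OF \<psi>_int has_integral_bi_exp_conv[OF that] h_nonneg])
        (simp add: bi_exp_def)
    then show ?thesis using bi_exp_conv_zero[OF that] by simp
  qed
  have conv_ge: "B * bi_exp_conv (- q) m (\<xi> - c * \<tau>) \<le> B * V"
  proof (cases "B > 0")
    case True
    have "bi_exp_conv (- q) m (\<xi> - c * \<tau>) \<le> V" unfolding V_def
      by (rule has_integral_le_conv[OF \<psi>_int has_integral_bi_exp_conv[OF True] h_nonneg g_le])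
    then show ?thesis using True by (simp add: mult_left_mono)
  qed (use B_nonneg in simp)
  have f_ge: "A * ?g \<xi> + B * V - ?err \<le> f (?g \<xi>) V"
    using g_pos g_bounds V_range V_small by (intro f_lower_bound) auto
  have "disc_lap ?g \<xi> \<le> disc_lap ?\<psi> \<xi>"
    using g_le[of "\<xi> + 1"] g_le[of "\<xi> - 1"] \<psi>_\<xi> unfolding disc_lap_def by linarith
  then have lap: "d * disc_lap ?g \<xi> \<le> d * disc_lap ?\<psi> \<xi>"
    using d_nonneg by (rule mult_left_mono)
  have "Nop c d \<tau> f h ?\<psi> \<xi> (bi_exp_deriv (- q) m \<xi>)
      \<le> c * bi_exp_deriv (- q) m \<xi> - d * disc_lap ?g \<xi> - A * ?g \<xi> - B * bi_exp_conv (- q) m (\<xi> - c * \<tau>) + ?err"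
    unfolding Nop_def \<psi>_\<xi> V_def[symmetric] using conv_ge f_ge lap by linarith
  also have "\<dots> = - q * \<Delta> (\<eta> * lam1) * exp (\<eta> * lam1 * (\<xi> + m)) + ?err"
    by (simp only: linearized_op_bi_exp)
  also have "\<dots> \<le> 0" using error_le_residual[OF R(1) q] by simp
  finally show ?thesis .
qed

lemma sub_solution_phi_minus:
  assumes q: "Q0 < q"
  shows "sub_solution K c d \<tau> f h (phi_minus q m)"
proof -
  define \<xi>1 where "\<xi>1 = phi_minus_edge q m"
  note q_pos = order_less_trans[OF zero_less_one gt_Q0D(1)[OF q]]
  note q_bounds = less_imp_le[OF gt_Q0D(1)[OF q]] less_imp_le[OF gt_Q0D(2)[OF q]]
  note trunc = phi_minus_truncation[OF q_pos, of m, folded \<xi>1_def]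
  note \<psi>_range = phi_minus_range[OF q_bounds, of m]
  have "(\<eta> * lam1)-lipschitz_on UNIV (phi_minus q m)"
    unfolding trunc
    by (rule lipschitz_on_truncation[OF has_real_derivative_bi_exp bi_exp_neg_deriv_bound[OF q_bounds]])
      (simp add: \<xi>1_def)
  then have abs_cont: "abs_continuous (phi_minus q m)" by (rule lipschitz_imp_abs_continuous)
  have "((\<lambda>\<xi>. max 0 (bi_exp (- q) m \<xi>)) \<longlongrightarrow> max 0 0) at_bot"
    by (intro tendsto_intros tendsto_bi_exp_at_bot)
  then have lim: "(phi_minus q m \<longlongrightarrow> 0) at_bot" by (simp add: phi_minus_def)
  have "phi_minus q m (\<xi>1 - 1) \<noteq> 0"
    using bi_exp_neg_pos_iff[OF q_pos, of m "\<xi>1 - 1"] by (simp add: phi_minus_def \<xi>1_def)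
  then have nonzero: "\<exists>x. phi_minus q m x \<noteq> 0" ..
  have pointwise: "\<exists>D. (phi_minus q m has_real_derivative D) (at \<xi>) \<and> Nop c d \<tau> f h (phi_minus q m) \<xi> D \<le> 0"
    if "\<xi> \<noteq> \<xi>1" for \<xi>
  proof (cases "\<xi> < \<xi>1")
    case True
    have "(phi_minus q m has_real_derivative bi_exp_deriv (- q) m \<xi>) (at \<xi>)"
      unfolding trunc by (rule has_real_derivative_truncation_below[OF has_real_derivative_bi_exp True])
    then show ?thesis using Nop_phi_minus_positive[OF q] True unfolding \<xi>1_def by blast
  next
    case False
    then have "\<xi>1 < \<xi>" using that by simp
    have "(phi_minus q m has_real_derivative 0) (at \<xi>)"
      unfolding trunc by (rule has_real_derivative_truncation_above[OF \<open>\<xi>1 < \<xi>\<close>])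
    moreover have "phi_minus q m \<xi> = 0"
      using \<open>\<xi>1 < \<xi>\<close> bi_exp_neg_edge[OF q_pos] by (simp add: trunc \<xi>1_def)
    ultimately show ?thesis
      using Nop_nonpos_at_zero[OF continuous_on_phi_minus \<psi>_range] by blast
  qed
  have "AE \<xi> in lborel. \<exists>D. (phi_minus q m has_real_derivative D) (at \<xi>) \<and> Nop c d \<tau> f h (phi_minus q m) \<xi> D \<le> 0"
    using AE_lborel_singleton[of \<xi>1] by eventually_elim (rule pointwise)
  then show ?thesis
    unfolding sub_solution_def admissible_def
    using abs_cont lim nonzero continuous_on_phi_minus[of q m] \<psi>_range by simp
qed
end

theorem lemma3p3:
  fixes d \<tau> K M \<sigma> c cstar lam1 lam2 \<eta> :: real
    and f f1 f2 :: "real \<Rightarrow> real \<Rightarrow> real"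
    and h :: "real \<Rightarrow> real"
    and lam0 :: ereal
  assumes d_pos: "d > 0" and tau_nonneg: "\<tau> \<ge> 0" and K_pos: "K > 0"
    \<comment> \<open>partial derivatives f1 = \<partial>_1 f, f2 = \<partial>_2 f on [0,K]^2\<close>
    and f1_deriv: "\<And>u v. u \<in> {0..K} \<Longrightarrow> v \<in> {0..K} \<Longrightarrow>
        ((\<lambda>x. f x v) has_real_derivative f1 u v) (at u within {0..K})"
    and f2_deriv: "\<And>u v. u \<in> {0..K} \<Longrightarrow> v \<in> {0..K} \<Longrightarrow>
        ((\<lambda>y. f u y) has_real_derivative f2 u v) (at v within {0..K})"
    \<comment> \<open>(F1)\<close>
    and F1_cont: "continuous_on ({0..K} \<times> {0..K}) (\<lambda>(u, v). f u v)"
    and F1_zero: "f 0 0 = 0" "f K K = 0"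
    and F1_pos: "\<And>u. 0 < u \<Longrightarrow> u < K \<Longrightarrow> f u u > 0"
    and F1_mono: "\<And>u v. u \<in> {0..K} \<Longrightarrow> v \<in> {0..K} \<Longrightarrow> f2 u v \<ge> 0"
    \<comment> \<open>(F2)\<close>
    and F2_M: "M > 0" and F2_sigma: "0 < \<sigma>" "\<sigma> \<le> 1"
    and F2_bound: "\<And>u v. u \<in> {0..K} \<Longrightarrow> v \<in> {0..K} \<Longrightarrow>
        0 \<le> f1 0 0 * u + f2 0 0 * v - f u v \<and>
        f1 0 0 * u + f2 0 0 * v - f u v \<le> M * (u + v) powr (1 + \<sigma>)"
    and F2_K: "f1 K K + f2 K K < 0"
    \<comment> \<open>(H1)\<close>
    and H1_nonneg: "\<And>x. h x \<ge> 0" and H1_even: "\<And>x. h (- x) = h x"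
    and H1_int: "h integrable_on UNIV" and H1_one: "integral UNIV h = 1"
    \<comment> \<open>(H2)\<close>
    and H2_pos: "lam0 > 0"
    and H2_exp: "\<And>l. ereal l < lam0 \<Longrightarrow> (\<lambda>x. h x * exp (l * x)) integrable_on {0..}"
    \<comment> \<open>c^* and its defining property (from the context)\<close>
    and cstar_pos: "cstar > 0"
    and cstar_def: "\<exists>ls. 0 < ls \<and> ereal ls < lambda_plus (f2 0 0) lam0 \<and>
        Delta d \<tau> (f1 0 0) (f2 0 0) h cstar ls = 0 \<and>
        ((\<lambda>l. Delta d \<tau> (f1 0 0) (f2 0 0) h cstar l) has_real_derivative 0) (at ls)"
    and cstar_unique: "\<And>c' ls. c' > 0 \<Longrightarrow> 0 < ls \<Longrightarrow> ereal ls < lambda_plus (f2 0 0) lam0 \<Longrightarrow>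
        Delta d \<tau> (f1 0 0) (f2 0 0) h c' ls = 0 \<Longrightarrow>
        ((\<lambda>l. Delta d \<tau> (f1 0 0) (f2 0 0) h c' l) has_real_derivative 0) (at ls) \<Longrightarrow> c' = cstar"
    and c_gt: "c > cstar"
    \<comment> \<open>lam1(c) < lam2(c): the two positive roots of \<Delta>(c,.) in (0,\<lambda>^+)\<close>
    and lam_order: "0 < lam1" "lam1 < lam2" "ereal lam2 < lambda_plus (f2 0 0) lam0"
    and lam_roots: "Delta d \<tau> (f1 0 0) (f2 0 0) h c lam1 = 0"
                   "Delta d \<tau> (f1 0 0) (f2 0 0) h c lam2 = 0"
    and lam_only: "\<And>l. 0 < l \<Longrightarrow> ereal l < lambda_plus (f2 0 0) lam0 \<Longrightarrow>
        Delta d \<tau> (f1 0 0) (f2 0 0) h c l = 0 \<Longrightarrow> l = lam1 \<or> l = lam2"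
    \<comment> \<open>\<eta> \<in> (1, min{1+\<sigma>, lam2/lam1})\<close>
    and eta: "1 < \<eta>" "\<eta> < 1 + \<sigma>" "\<eta> < lam2 / lam1"
  shows "\<exists>Q > 1. \<forall>q > Q. \<forall>\<xi>p \<xi>m.
     super_solution K c d \<tau> f h
       (\<lambda>\<xi>. min K (exp (lam1 * (\<xi> + \<xi>p)) + q * exp (\<eta> * lam1 * (\<xi> + \<xi>p)))) \<and>
     sub_solution K c d \<tau> f h
       (\<lambda>\<xi>. max 0 (exp (lam1 * (\<xi> + \<xi>m)) - q * exp (\<eta> * lam1 * (\<xi> + \<xi>m))))"
proof -
  \<comment> \<open>c > c^* enters only through lam1 and lam2.\<close>
  interpret front_setting d \<tau> K M \<sigma> c lam1 lam2 \<eta> f f1 f2 h lam0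
    using less_imp_le[OF d_pos] K_pos f2_deriv F1_zero F1_mono less_imp_le[OF F2_M] F2_bound
      H1_nonneg H1_even H1_int H1_one H2_exp lam_order lam_roots lam_only eta
    by unfold_locales
  show ?thesis
  proof (intro exI[of _ "Q0 + 1"] conjI allI impI)
    show "1 < Q0 + 1" using one_le_Q0 by simp
    fix q \<xi>p \<xi>m :: real
    assume "Q0 + 1 < q"
    then have q: "0 \<le> q" "Q0 < q" using one_le_Q0 by simp_all
    show "super_solution K c d \<tau> f h
       (\<lambda>\<xi>. min K (exp (lam1 * (\<xi> + \<xi>p)) + q * exp (\<eta> * lam1 * (\<xi> + \<xi>p))))"
      using super_solution_phi_plus[OF q(1), of \<xi>p] unfolding phi_plus_def bi_exp_def .
    show "sub_solution K c d \<tau> f h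
       (\<lambda>\<xi>. max 0 (exp (lam1 * (\<xi> + \<xi>m)) - q * exp (\<eta> * lam1 * (\<xi> + \<xi>m))))"
      using sub_solution_phi_minus[OF q(2), of \<xi>m] unfolding phi_minus_def bi_exp_def by simp
  qed
qed

end
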